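(* Let $M$ be a smooth compact manifold with distance $d$ induced by a Riemannian metric. Every topologically stable IFS $\omega:\Lambda\times M\to M$ has the shadowing property.
   Context: An IFS with phase space $M$ is given by a compact metric space $\Lambda$ and a continuous map $\omega:\Lambda\times M\to M$; $\omega_\lambda=\omega(\lambda,\cdot)$. For $\sigma=(\lambda_1,\lambda_2,\dots)$, $\omega_{\sigma_0}=\mathrm{id}$, $\omega_{\sigma_k}=\omega_{\lambda_k}\circ\cdots\circ\omega_{\lambda_1}$. A chain is a sequence $\{y_k\}_{k\ge0}$ with $y_k=\omega_{\lambda_k}(y_{k-1})$ for some $\lambda_k\in\Lambda$, $k\ge1$. A $\delta$-chain is a sequence $\{x_k\}_{k\ge0}$ such that for each $k\ge1$ there is $\lambda_k$ with $d(x_k,\omega_{\lambda_k}(x_{k-1}))\le\delta$. Shadowing property: for every $\varepsilon>0$ there is $\delta>0$ such that for every $\delta$-chain $\{x_k\}$ there is a chain $\{y_k\}$ with $d(x_k,y_k)<\varepsilon$ for all $k\ge0$. $d_{C^0}(f,g)=\max_x d(f(x),g(x))$; $d_H(\omega,\tilde\omega)$ is the Hausdorff distance w.r.t. $d_{C^0}$ between $\{\omega_\lambda:\lambda\in\Lambda\}$ and $\{\tilde\omega_\lambda:\lambda\in\tilde\Lambda\}$. A pair $(\sigma,\tilde\sigma)$ of sequences in $\Lambda$ and $\tilde\Lambda$ is $\delta$-compatible if $d_{C^0}(\omega_{\lambda_k},\tilde\omega_{\tilde\lambda_k})<\delta$ for all $k$. Topologically stable: for every $\varepsilon>0$ there is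 $\delta>0$ such that whenever $\tilde\omega$ is an IFS on $M$ (any compact metric parameter space $\tilde\Lambda$) with $d_H(\omega,\tilde\omega)\le\delta$, then for each $\delta$-compatible pair $(\sigma,\tilde\sigma)\in\Lambda^{\mathbb N}\times\tilde\Lambda^{\mathbb N}$ there is a continuous $h:M\to M$ with $d_{C^0}(\omega_{\sigma_k}\circ h,\tilde\omega_{\tilde\sigma_k})<\varepsilon$ for all $k\in\mathbb N$ and $d_{C^0}(h,\mathrm{id})<\varepsilon$. *)

theory Defs
  imports "HOL-Analysis.Analysis"
begin

section \<open>Smooth compact manifolds, realised as embedded submanifolds of Euclidean space\<close>

fun Ck_on :: "nat \<Rightarrow> 'a::euclidean_space set \<Rightarrow> ('a \<Rightarrow> 'b::euclidean_space) \<Rightarrow> bool" where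
  "Ck_on 0 U f = continuous_on U f"
| "Ck_on (Suc k) U f =
     (f differentiable_on U \<and> (\<forall>b\<in>Basis. Ck_on k U (\<lambda>x. frechet_derivative f (at x) b)))"

definition smooth_on :: "'a::euclidean_space set \<Rightarrow> ('a \<Rightarrow> 'b::euclidean_space) \<Rightarrow> bool" where
  "smooth_on U f \<longleftrightarrow> (\<forall>k. Ck_on k U f)"

definition smooth_submanifold :: "nat \<Rightarrow> 'a::euclidean_space set \<Rightarrow> bool" where
  "smooth_submanifold k M \<longleftrightarrow>
     (\<forall>p\<in>M. \<exists>U V (\<phi>::'a \<Rightarrow> 'a) \<psi> S.
        open U \<and> p \<in> U \<and> open V \<and> smooth_on U \<phi> \<and> smooth_on V \<psi> \<and>
        \<phi> ` U = V \<and> (\<forall>x\<in>U. \<psi> (\<phi> x) = x) \<and> (\<forall>y\<in>V. \<phi> (\<psi> y) = y) \<and>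
        subspace S \<and> dim S = k \<and> \<phi> ` (U \<inter> M) = V \<inter> S)"

text \<open>Length of a curve (supremum of inscribed polygon lengths) and the induced
  intrinsic (Riemannian) distance on M; it is \<infinity> between different components.\<close>
definition curve_length :: "(real \<Rightarrow> 'a::metric_space) \<Rightarrow> ereal" where
  "curve_length \<gamma> =
     (SUP p \<in> {(n, t::nat \<Rightarrow> real). t 0 = 0 \<and> t n = 1 \<and> (\<forall>i<n. t i \<le> t (Suc i))}.
        ereal (\<Sum>i<fst p. dist (\<gamma> (snd p (Suc i))) (\<gamma> (snd p i))))"

definition riem_dist :: "'a::real_normed_vector set \<Rightarrow> 'a \<Rightarrow> 'a \<Rightarrow> ereal" where
  "riem_dist M x y =
     (INF \<gamma> \<in> {\<gamma>. path \<gamma> \<and> path_image \<gamma> \<subseteq> M \<and> pathstart \<gamma> = x \<and> pathfinish \<gamma> = y}.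
        curve_length \<gamma>)"

definition is_IFS :: "'a::topological_space set \<Rightarrow> 'l::metric_space set \<Rightarrow> ('l \<Rightarrow> 'a \<Rightarrow> 'a) \<Rightarrow> bool" where
  "is_IFS M \<Lambda> \<omega> \<longleftrightarrow> compact \<Lambda> \<and> continuous_on (\<Lambda> \<times> M) (\<lambda>(l, x). \<omega> l x) \<and>
     (\<forall>l\<in>\<Lambda>. \<forall>x\<in>M. \<omega> l x \<in> M)"

definition dC0 :: "'a set \<Rightarrow> ('a \<Rightarrow> 'a \<Rightarrow> ereal) \<Rightarrow> ('a \<Rightarrow> 'a) \<Rightarrow> ('a \<Rightarrow> 'a) \<Rightarrow> ereal" where
  "dC0 M d f g = (SUP x\<in>M. d (f x) (g x))"

definition dH :: "'a set \<Rightarrow> ('a \<Rightarrow> 'a \<Rightarrow> ereal) \<Rightarrow> 'l set \<Rightarrow> ('l \<Rightarrow> 'a \<Rightarrow> 'a)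
                   \<Rightarrow> 'm set \<Rightarrow> ('m \<Rightarrow> 'a \<Rightarrow> 'a) \<Rightarrow> ereal" where
  "dH M d \<Lambda> \<omega> \<Lambda>' \<omega>' =
     max (SUP l\<in>\<Lambda>. INF l'\<in>\<Lambda>'. dC0 M d (\<omega> l) (\<omega>' l'))
         (SUP l'\<in>\<Lambda>'. INF l\<in>\<Lambda>. dC0 M d (\<omega> l) (\<omega>' l'))"

text \<open>omega_seq \<omega> \<sigma> k = \<omega>_{\<lambda>_k} \<circ> ... \<circ> \<omega>_{\<lambda>_1}, where \<lambda>_{i+1} = \<sigma> i.\<close>
fun omega_seq :: "('l \<Rightarrow> 'a \<Rightarrow> 'a) \<Rightarrow> (nat \<Rightarrow> 'l) \<Rightarrow> nat \<Rightarrow> 'a \<Rightarrow> 'a" where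
  "omega_seq \<omega> \<sigma> 0 = id"
| "omega_seq \<omega> \<sigma> (Suc k) = \<omega> (\<sigma> k) \<circ> omega_seq \<omega> \<sigma> k"

definition is_delta_chain :: "'a set \<Rightarrow> ('a \<Rightarrow> 'a \<Rightarrow> ereal) \<Rightarrow> 'l set \<Rightarrow> ('l \<Rightarrow> 'a \<Rightarrow> 'a)
                               \<Rightarrow> real \<Rightarrow> (nat \<Rightarrow> 'a) \<Rightarrow> bool" where
  "is_delta_chain M d \<Lambda> \<omega> \<delta> x \<longleftrightarrow> (\<forall>k. x k \<in> M) \<and>
     (\<forall>k. \<exists>l\<in>\<Lambda>. d (x (Suc k)) (\<omega> l (x k)) \<le> ereal \<delta>)"

definition is_chain :: "'a set \<Rightarrow> 'l set \<Rightarrow> ('l \<Rightarrow> 'a \<Rightarrow> 'a) \<Rightarrow> (nat \<Rightarrow> 'a) \<Rightarrow> bool" where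
  "is_chain M \<Lambda> \<omega> y \<longleftrightarrow> (\<forall>k. y k \<in> M) \<and> (\<forall>k. \<exists>l\<in>\<Lambda>. y (Suc k) = \<omega> l (y k))"

definition has_shadowing :: "'a set \<Rightarrow> ('a \<Rightarrow> 'a \<Rightarrow> ereal) \<Rightarrow> 'l set \<Rightarrow> ('l \<Rightarrow> 'a \<Rightarrow> 'a) \<Rightarrow> bool" where
  "has_shadowing M d \<Lambda> \<omega> \<longleftrightarrow>
     (\<forall>\<epsilon>>0. \<exists>\<delta>>0. \<forall>x. is_delta_chain M d \<Lambda> \<omega> \<delta> x \<longrightarrow>
        (\<exists>y. is_chain M \<Lambda> \<omega> y \<and> (\<forall>k. d (x k) (y k) < ereal \<epsilon>)))"

text \<open>Perturbing IFSs range over all compact parameter spaces;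
  every compact metric space is homeomorphic to a compact subset of the Hilbert cube
  inside nat \<Rightarrow> real (product metric), so we take parameter sets there.\<close>
definition topologically_stable ::
    "'a::topological_space set \<Rightarrow> ('a \<Rightarrow> 'a \<Rightarrow> ereal) \<Rightarrow> 'l set \<Rightarrow> ('l \<Rightarrow> 'a \<Rightarrow> 'a) \<Rightarrow> bool" where
  "topologically_stable M d \<Lambda> \<omega> \<longleftrightarrow>
     (\<forall>\<epsilon>>0. \<exists>\<delta>>0. \<forall>(\<Lambda>'::(nat \<Rightarrow> real) set) \<omega>'.
        is_IFS M \<Lambda>' \<omega>' \<and> dH M d \<Lambda> \<omega> \<Lambda>' \<omega>' \<le> ereal \<delta> \<longrightarrow>
        (\<forall>\<sigma> \<sigma>'. (\<forall>k. \<sigma> k \<in> \<Lambda> \<and> \<sigma>' k \<in> \<Lambda>') \<and>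
                 (\<forall>k. dC0 M d (\<omega> (\<sigma> k)) (\<omega>' (\<sigma>' k)) < ereal \<delta>) \<longrightarrow>
           (\<exists>h. continuous_on M h \<and> h ` M \<subseteq> M \<and>
                (\<forall>k. dC0 M d (omega_seq \<omega> \<sigma> k \<circ> h) (omega_seq \<omega>' \<sigma>' k) < ereal \<epsilon>) \<and>
                dC0 M d h id < ereal \<epsilon>)))"

end

theory Submission
  imports Defs
begin

text \<open>
  Because \<open>M\<close> is locally a linear
  subspace in a chart, any two sufficiently close points \<open>p\<close>, \<open>q\<close> of \<open>M\<close> are related by a
  continuous self-map of \<open>M\<close> that sends \<open>p\<close> to \<open>q\<close> and moves no point by more than \<open>\<eta>\<close> in
  the Riemannian distance. Composing such maps with the maps of a pseudo-orbit \<open>x\<close> turns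
  \<open>x\<close> into an exact orbit of maps \<open>g k\<close> that are \<open>\<delta>\<close>-close to \<open>\<omega> (\<sigma> k)\<close>.
  For every horizon \<open>n\<close>, the maps \<open>g 0, \<dots>, g (n - 1)\<close> together with a finite net of the
  maps of \<open>\<omega>\<close> form a finite IFS that is \<open>\<delta>\<close>-close to \<open>\<omega>\<close>, so stability yields \<open>h\<close>
  such that the true orbit of \<open>h (x 0)\<close> traces \<open>x\<close> up to time \<open>n\<close>. By compactness a
  cluster point of these starting points has a true orbit shadowing \<open>x\<close> for all times.
\<close>

section \<open>Curve length and the intrinsic distance\<close>

lemma partition_sum_le_curve_length:
  assumes "t 0 = 0" "t n = 1" "\<And>i. i < n \<Longrightarrow> t i \<le> t (Suc i)"
  shows "ereal (\<Sum>i<n. dist (\<gamma> (t (Suc i))) (\<gamma> (t i))) \<le> curve_length \<gamma>"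
  unfolding curve_length_def by (rule SUP_upper2[of "(n, t)"]) (use assms in auto)

lemma curve_length_le:
  assumes "\<And>n t. t 0 = 0 \<Longrightarrow> t n = 1 \<Longrightarrow> (\<forall>i<n. t i \<le> t (Suc i)) \<Longrightarrow>
             ereal (\<Sum>i<n. dist (\<gamma> (t (Suc i))) (\<gamma> (t i))) \<le> B"
  shows "curve_length \<gamma> \<le> B"
  unfolding curve_length_def by (rule SUP_least) (use assms in auto)

lemma partition_in_unit_interval:
  fixes t :: "nat \<Rightarrow> real"
  assumes "t 0 = 0" "t n = 1" "\<forall>i<n. t i \<le> t (Suc i)" "i \<le> n"
  shows "t i \<in> {0..1}"
proof -
  have "t 0 \<le> t j" if "j \<le> n" for j
    using that
  proof (induction j)
    case (Suc j)
    then have "t 0 \<le> t j" "t j \<le> t (Suc j)" using assms(3) by auto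
    then show ?case by linarith
  qed auto
  moreover have "t i \<le> t n"
    using \<open>i \<le> n\<close>
  proof (induction i rule: inc_induct)
    case (step m)
    then show ?case using assms(3) by force
  qed simp
  ultimately show ?thesis using assms(1,2,4) by simp
qed

lemma curve_length_le_lipschitz:
  assumes "C-lipschitz_on {0..1} \<gamma>"
  shows "curve_length \<gamma> \<le> ereal C"
proof (rule curve_length_le)
  fix n and t :: "nat \<Rightarrow> real"
  assume t: "t 0 = 0" "t n = 1" "\<forall>i<n. t i \<le> t (Suc i)"
  have "(\<Sum>i<n. dist (\<gamma> (t (Suc i))) (\<gamma> (t i))) \<le> (\<Sum>i<n. C * (t (Suc i) - t i))"
  proof (rule sum_mono)
    fix i assume "i \<in> {..<n}"
    then have "t i \<in> {0..1}" "t (Suc i) \<in> {0..1}" "t i \<le> t (Suc i)"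
      using partition_in_unit_interval[OF t] t(3) by auto
    then show "dist (\<gamma> (t (Suc i))) (\<gamma> (t i)) \<le> C * (t (Suc i) - t i)"
      using lipschitz_onD[OF assms, of "t (Suc i)" "t i"] by (simp add: dist_real_def)
  qed
  also have "\<dots> = C"
    using t by (simp add: sum_distrib_left[symmetric] sum_lessThan_telescope)
  finally show "ereal (\<Sum>i<n. dist (\<gamma> (t (Suc i))) (\<gamma> (t i))) \<le> ereal C"
    by simp
qed

lemma dist_le_curve_length: "ereal (dist (\<gamma> 0) (\<gamma> 1)) \<le> curve_length \<gamma>"
  using partition_sum_le_curve_length[of "\<lambda>i. if i = 0 then 0 else 1" 1 \<gamma>]
  by (simp add: dist_commute)

lemma curve_length_reversepath_le: "curve_length (reversepath \<gamma>) \<le> curve_length \<gamma>"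
proof (rule curve_length_le)
  fix n and t :: "nat \<Rightarrow> real"
  assume t: "t 0 = 0" "t n = 1" "\<forall>i<n. t i \<le> t (Suc i)"
  define t' where "t' i = 1 - t (n - i)" for i
  have mono: "t' i \<le> t' (Suc i)" if "i < n" for i
    using t(3)[rule_format, of "n - Suc i"] that by (simp add: t'_def Suc_diff_Suc)
  have "(\<Sum>i<n. dist (reversepath \<gamma> (t (Suc i))) (reversepath \<gamma> (t i)))
      = (\<Sum>i<n. dist (\<gamma> (1 - t (Suc (n - Suc i)))) (\<gamma> (1 - t (n - Suc i))))"
    unfolding reversepath_def by (rule sum.nat_diff_reindex[symmetric])
  also have "\<dots> = (\<Sum>i<n. dist (\<gamma> (t' (Suc i))) (\<gamma> (t' i)))"
    unfolding t'_def by (intro sum.cong refl) (auto simp: dist_commute Suc_diff_Suc)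
  finally show "ereal (\<Sum>i<n. dist (reversepath \<gamma> (t (Suc i))) (reversepath \<gamma> (t i)))
      \<le> curve_length \<gamma>"
    using partition_sum_le_curve_length[of t' n \<gamma>] mono t by (simp add: t'_def)
qed

lemma dist_le_split_at:
  fixes f :: "real \<Rightarrow> 'a::metric_space"
  assumes "a \<le> b"
  shows "dist (f b) (f a) \<le> dist (f (min b c)) (f (min a c)) + dist (f (max b c)) (f (max a c))"
  using assms dist_triangle[of "f b" "f a" "f c"]
  by (cases "b \<le> c"; cases "c \<le> a") (auto simp: min_def max_def dist_commute)

lemma curve_length_join_le:
  assumes "pathfinish \<gamma>1 = pathstart \<gamma>2"
  shows "curve_length (\<gamma>1 +++ \<gamma>2) \<le> curve_length \<gamma>1 + curve_length \<gamma>2"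
proof (rule curve_length_le)
  fix n and t :: "nat \<Rightarrow> real"
  assume t: "t 0 = 0" "t n = 1" "\<forall>i<n. t i \<le> t (Suc i)"
  let ?\<gamma> = "\<gamma>1 +++ \<gamma>2"
  define s where "s i = 2 * min (t i) (1/2)" for i
  define u where "u i = 2 * max (t i) (1/2) - 1" for i
  have first_half: "?\<gamma> (min r (1/2)) = \<gamma>1 (2 * min r (1/2))" for r
    by (auto simp: joinpaths_def min_def)
  have second_half: "?\<gamma> (max r (1/2)) = \<gamma>2 (2 * max r (1/2) - 1)" for r
    using assms by (auto simp: joinpaths_def pathfinish_def pathstart_def max_def)
  have "(\<Sum>i<n. dist (?\<gamma> (t (Suc i))) (?\<gamma> (t i))) \<le>
        (\<Sum>i<n. dist (?\<gamma> (min (t (Suc i)) (1/2))) (?\<gamma> (min (t i) (1/2))) +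
                dist (?\<gamma> (max (t (Suc i)) (1/2))) (?\<gamma> (max (t i) (1/2))))"
    using t(3) by (intro sum_mono dist_le_split_at) auto
  also have "\<dots> = (\<Sum>i<n. dist (\<gamma>1 (s (Suc i))) (\<gamma>1 (s i))) +
                  (\<Sum>i<n. dist (\<gamma>2 (u (Suc i))) (\<gamma>2 (u i)))"
    unfolding sum.distrib first_half second_half s_def u_def ..
  finally have "ereal (\<Sum>i<n. dist (?\<gamma> (t (Suc i))) (?\<gamma> (t i))) \<le>
      ereal (\<Sum>i<n. dist (\<gamma>1 (s (Suc i))) (\<gamma>1 (s i))) + ereal (\<Sum>i<n. dist (\<gamma>2 (u (Suc i))) (\<gamma>2 (u i)))"
    by simp
  also have "\<dots> \<le> curve_length \<gamma>1 + curve_length \<gamma>2"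
    using t by (intro add_mono partition_sum_le_curve_length) (auto simp: s_def u_def)
  finally show "ereal (\<Sum>i<n. dist (?\<gamma> (t (Suc i))) (?\<gamma> (t i))) \<le> curve_length \<gamma>1 + curve_length \<gamma>2" .
qed

lemma riem_dist_le_curve_length:
  "path \<gamma> \<Longrightarrow> path_image \<gamma> \<subseteq> M \<Longrightarrow> riem_dist M (pathstart \<gamma>) (pathfinish \<gamma>) \<le> curve_length \<gamma>"
  unfolding riem_dist_def by (rule INF_lower) auto

lemma riem_dist_less_iff:
  "riem_dist M x y < ereal e \<longleftrightarrow>
     (\<exists>\<gamma>. path \<gamma> \<and> path_image \<gamma> \<subseteq> M \<and> pathstart \<gamma> = x \<and> pathfinish \<gamma> = y \<and>
          curve_length \<gamma> < ereal e)"
  unfolding riem_dist_def INF_less_iff by auto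

lemma dist_le_riem_dist: "ereal (dist x y) \<le> riem_dist M x y"
  unfolding riem_dist_def
  using dist_le_curve_length by (intro INF_greatest) (auto simp: pathstart_def pathfinish_def)

lemma riem_dist_commute: "riem_dist M x y = riem_dist M y x"
proof -
  have "riem_dist M y x \<le> riem_dist M x y" for x y
    unfolding riem_dist_def[of M x y]
  proof (rule INF_greatest, clarify)
    fix \<gamma> assume "path \<gamma>" "path_image \<gamma> \<subseteq> M" "x = pathstart \<gamma>" "y = pathfinish \<gamma>"
    then show "riem_dist M (pathfinish \<gamma>) (pathstart \<gamma>) \<le> curve_length \<gamma>"
      using riem_dist_le_curve_length[of "reversepath \<gamma>" M] curve_length_reversepath_le[of \<gamma>]
      by simp
  qed
  then show ?thesis by (intro antisym)
qed

lemma riem_dist_self: "x \<in> M \<Longrightarrow> riem_dist M x x = 0"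
  using riem_dist_le_curve_length[of "\<lambda>_. x" M] curve_length_le_lipschitz[of 0 "\<lambda>_. x"]
    dist_le_riem_dist[of x x M]
  by (simp add: lipschitz_on_constant path_def pathstart_def pathfinish_def path_image_def
      zero_ereal_def)

lemma riem_dist_triangle_less:
  assumes "riem_dist M x y < ereal a" "riem_dist M y z < ereal b"
  shows "riem_dist M x z < ereal (a + b)"
proof -
  obtain \<gamma>1 where \<gamma>1: "path \<gamma>1" "path_image \<gamma>1 \<subseteq> M" "pathstart \<gamma>1 = x" "pathfinish \<gamma>1 = y"
    "curve_length \<gamma>1 < ereal a" using assms(1) unfolding riem_dist_less_iff by blast
  obtain \<gamma>2 where \<gamma>2: "path \<gamma>2" "path_image \<gamma>2 \<subseteq> M" "pathstart \<gamma>2 = y" "pathfinish \<gamma>2 = z"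
    "curve_length \<gamma>2 < ereal b" using assms(2) unfolding riem_dist_less_iff by blast
  have "curve_length (\<gamma>1 +++ \<gamma>2) \<le> curve_length \<gamma>1 + curve_length \<gamma>2"
    using \<gamma>1 \<gamma>2 by (intro curve_length_join_le) simp
  also have "\<dots> < ereal a + ereal b"
    using \<gamma>1(5) \<gamma>2(5) by (rule ereal_add_strict_mono2)
  finally show ?thesis
    unfolding riem_dist_less_iff using \<gamma>1 \<gamma>2
    by (intro exI[of _ "\<gamma>1 +++ \<gamma>2"]) (auto simp: path_image_join)
qed

lemma riem_dist_lipschitz_image_le:
  fixes \<psi> :: "'a::real_normed_vector \<Rightarrow> 'b::real_normed_vector"
  assumes lip: "L-lipschitz_on C \<psi>" and seg: "closed_segment a b \<subseteq> C" "\<psi> ` closed_segment a b \<subseteq> M"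
  shows "riem_dist M (\<psi> a) (\<psi> b) \<le> ereal (L * dist a b)"
proof -
  let ?\<gamma> = "\<psi> \<circ> linepath a b"
  have "path ?\<gamma>"
    using seg(1) by (intro path_continuous_image path_linepath)
      (auto intro: continuous_on_subset[OF lipschitz_on_continuous_on[OF lip]])
  moreover have "path_image ?\<gamma> \<subseteq> M"
    using seg(2) by (simp add: path_image_compose)
  moreover have "(L * dist a b)-lipschitz_on {0..1} ?\<gamma>"
  proof (rule lipschitz_onI)
    fix s t :: real assume "s \<in> {0..1}" "t \<in> {0..1}"
    then have "linepath a b s \<in> C" "linepath a b t \<in> C"
      using seg(1) linepath_image_01 by blast+
    then have "dist (?\<gamma> s) (?\<gamma> t) \<le> L * dist (linepath a b s) (linepath a b t)"
      using lipschitz_onD[OF lip] by simp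
    also have "dist (linepath a b s) (linepath a b t) = \<bar>s - t\<bar> * dist a b"
    proof -
      have "linepath a b s - linepath a b t = (s - t) *\<^sub>R (b - a)"
        by (simp add: linepath_def algebra_simps)
      then show ?thesis by (simp add: dist_norm norm_minus_commute)
    qed
    finally show "dist (?\<gamma> s) (?\<gamma> t) \<le> L * dist a b * dist s t"
      by (simp add: dist_real_def mult_ac)
  qed (use lipschitz_on_nonneg[OF lip] in simp)
  ultimately have "riem_dist M (pathstart ?\<gamma>) (pathfinish ?\<gamma>) \<le> ereal (L * dist a b)"
    by (metis riem_dist_le_curve_length curve_length_le_lipschitz order_trans)
  then show ?thesis
    by (simp add: pathstart_def pathfinish_def linepath_0' linepath_1')
qed

section \<open>Charts and maps close to the identity\<close>

lemma C1_lipschitz_on_cball: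
  fixes \<psi> :: "'a::euclidean_space \<Rightarrow> 'b::euclidean_space"
  assumes C1: "Ck_on 1 V \<psi>" and "open V" and sub: "cball c R \<subseteq> V"
  obtains L where "L > 0" "L-lipschitz_on (cball c R) \<psi>"
proof -
  let ?D = "\<lambda>x. frechet_derivative \<psi> (at x)"
  have diff: "\<psi> differentiable_on V" and cont: "\<And>b. b \<in> Basis \<Longrightarrow> continuous_on V (\<lambda>x. ?D x b)"
    using C1 by (auto simp: One_nat_def)
  have "continuous_on (cball c R) (\<lambda>x. \<Sum>b\<in>Basis. norm (?D x b))"
    using cont continuous_on_subset[OF _ sub] by (intro continuous_intros) auto
  then have "bounded ((\<lambda>x. \<Sum>b\<in>Basis. norm (?D x b)) ` cball c R)"
    by (intro compact_imp_bounded compact_continuous_image) auto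
  then obtain B where "\<forall>y \<in> (\<lambda>x. \<Sum>b\<in>Basis. norm (?D x b)) ` cball c R. \<bar>y\<bar> \<le> B"
    unfolding bounded_real by blast
  then have B: "\<And>x. x \<in> cball c R \<Longrightarrow> (\<Sum>b\<in>Basis. norm (?D x b)) \<le> B"
    by (auto dest: abs_le_D1)
  have der: "(\<psi> has_derivative ?D x) (at x within cball c R)" if "x \<in> cball c R" for x
  proof -
    have "\<psi> differentiable (at x)"
      using that sub diff \<open>open V\<close> differentiable_on_eq_differentiable_at by blast
    then show ?thesis
      using frechet_derivative_works has_derivative_at_withinI by blast
  qed
  have "onorm (?D x) \<le> max 1 B" if "x \<in> cball c R" for x
    using onorm_componentwise[OF has_derivative_bounded_linear[OF der[OF that]]] B[OF that]
    by linarith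
  then have "norm (\<psi> x - \<psi> y) \<le> max 1 B * norm (x - y)" if "x \<in> cball c R" "y \<in> cball c R" for x y
    using differentiable_bound[OF convex_cball der] that by blast
  then have "(max 1 B)-lipschitz_on (cball c R) \<psi>"
    by (intro lipschitz_onI) (auto simp: dist_norm)
  then show thesis by (rule that[rotated]) simp
qed

definition near_identity :: "'a::real_normed_vector set \<Rightarrow> real \<Rightarrow> ('a \<Rightarrow> 'a) \<Rightarrow> bool" where
  "near_identity M \<eta> \<Phi> \<longleftrightarrow>
     continuous_on M \<Phi> \<and> \<Phi> ` M \<subseteq> M \<and> (\<forall>w\<in>M. riem_dist M w (\<Phi> w) < ereal \<eta>)"

locale flat_chart =
  fixes M U V :: "'a::euclidean_space set" and \<phi> \<psi> :: "'a \<Rightarrow> 'a" and S :: "'a set"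
  assumes open_U: "open U" and open_V: "open V"
    and continuous_phi: "continuous_on U \<phi>" and C1_psi: "Ck_on 1 V \<psi>"
    and psi_phi: "\<And>x. x \<in> U \<Longrightarrow> \<psi> (\<phi> x) = x"
    and subspace_S: "subspace S"
    and flattens: "\<phi> ` (U \<inter> M) = V \<inter> S"

lemma smooth_submanifold_chart:
  fixes M :: "'a::euclidean_space set"
  assumes "smooth_submanifold k M" "p \<in> M"
  obtains U V \<phi> \<psi> S where "flat_chart M U V \<phi> \<psi> S" "p \<in> U"
  using bspec[OF assms(1)[unfolded smooth_submanifold_def] assms(2)]
proof (elim exE conjE)
  fix U V S :: "'a set" and \<phi> \<psi> :: "'a \<Rightarrow> 'a"
  assume chart: "open U" "p \<in> U" "open V" "smooth_on U \<phi>" "smooth_on V \<psi>" "\<phi> ` U = V"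
    "\<forall>x\<in>U. \<psi> (\<phi> x) = x" "\<forall>y\<in>V. \<phi> (\<psi> y) = y" "subspace S" "dim S = k" "\<phi> ` (U \<inter> M) = V \<inter> S"
  have "continuous_on U \<phi>"
    using chart(4) unfolding smooth_on_def by (metis Ck_on.simps(1))
  moreover have "Ck_on 1 V \<psi>"
    using chart(5) unfolding smooth_on_def by blast
  ultimately have "flat_chart M U V \<phi> \<psi> S"
    using chart by (simp add: flat_chart_def)
  then show thesis using chart(2) by (rule that)
qed

definition tent :: "'a::metric_space \<Rightarrow> real \<Rightarrow> 'a \<Rightarrow> real" where
  "tent a r y = max 0 (1 - dist y a / r)"

lemma tent_bounds: "r > 0 \<Longrightarrow> 0 \<le> tent a r y \<and> tent a r y \<le> 1"
  by (auto simp: tent_def)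

lemma tent_outside: "r > 0 \<Longrightarrow> y \<notin> cball a r \<Longrightarrow> tent a r y = 0"
  by (auto simp: tent_def dist_commute)

lemma segment_subset_cball_subspace:
  fixes v :: "'a::real_normed_vector"
  assumes "subspace S" "y \<in> cball a r \<inter> S" "v \<in> S" "norm v \<le> r" "0 \<le> c" "c \<le> 1"
  shows "closed_segment y (y + c *\<^sub>R v) \<subseteq> cball a (2 * r) \<inter> S"
proof (rule closed_segment_subset)
  have "norm (c *\<^sub>R v) \<le> r"
    using assms(4-6) by (simp add: order_trans[OF mult_left_le_one_le])
  then have "dist a (y + c *\<^sub>R v) \<le> 2 * r"
    using assms(2) norm_triangle_ineq[of "y - a" "c *\<^sub>R v"]
    by (simp add: dist_norm norm_minus_commute algebra_simps)
  moreover have "r \<ge> 0"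
    using norm_ge_zero assms(4) by (rule order_trans)
  ultimately show "y \<in> cball a (2 * r) \<inter> S" "y + c *\<^sub>R v \<in> cball a (2 * r) \<inter> S"
    using assms by (auto intro: subspace_add subspace_scale)
  show "convex (cball a (2 * r) \<inter> S)"
    using assms(1) by (intro convex_Int convex_cball subspace_imp_convex)
qed

context flat_chart
begin

lemma continuous_psi: "continuous_on V \<psi>"
  using C1_psi by (auto simp: One_nat_def intro: differentiable_imp_continuous_on)

lemma psi_in_chart: "y \<in> V \<inter> S \<Longrightarrow> \<psi> y \<in> U \<inter> M \<and> \<phi> (\<psi> y) = y"
proof -
  assume "y \<in> V \<inter> S"
  then obtain u where "u \<in> U \<inter> M" "y = \<phi> u"
    using flattens by blast
  then show ?thesis using psi_phi by auto
qed

lemma phi_in_S: "z \<in> U \<inter> M \<Longrightarrow> \<phi> z \<in> S"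
  using flattens by blast

lemma phi_in_V: "z \<in> U \<inter> M \<Longrightarrow> \<phi> z \<in> V"
  using flattens by blast

text \<open>Pushing along the flat direction \<open>v\<close>, damped by a tent around \<open>a\<close>, moves \<open>\<psi> a\<close> to
  \<open>\<psi> (a + v)\<close> and fixes every point outside \<open>\<psi> ` cball a r\<close>.\<close>

definition push :: "'a \<Rightarrow> 'a \<Rightarrow> real \<Rightarrow> 'a \<Rightarrow> 'a" where
  "push a v r z = (if z \<in> U then \<psi> (\<phi> z + tent a r (\<phi> z) *\<^sub>R v) else z)"

context
  fixes a v :: 'a and r :: real
  assumes a: "a \<in> S" and v: "v \<in> S" and "r > 0" and "norm v \<le> r" and ball_V: "cball a (2 * r) \<subseteq> V"
begin

lemma push_eq_id: "z \<notin> U \<or> \<phi> z \<notin> cball a r \<Longrightarrow> push a v r z = z"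
  using psi_phi tent_outside[OF \<open>r > 0\<close>, of "\<phi> z" a] by (auto simp: push_def)

lemma push_in_chart:
  assumes "z \<in> U \<inter> M" "\<phi> z \<in> cball a r"
  shows "\<phi> z \<in> cball a r \<inter> S" "\<psi> (\<phi> z) = z" "push a v r z = \<psi> (\<phi> z + tent a r (\<phi> z) *\<^sub>R v)"
  using assms phi_in_S psi_phi by (auto simp: push_def)

lemma push_segment:
  assumes "z \<in> U \<inter> M" "\<phi> z \<in> cball a r"
  shows "closed_segment (\<phi> z) (\<phi> z + tent a r (\<phi> z) *\<^sub>R v) \<subseteq> cball a (2 * r)"
    and "\<psi> ` closed_segment (\<phi> z) (\<phi> z + tent a r (\<phi> z) *\<^sub>R v) \<subseteq> M"
proof -
  have "closed_segment (\<phi> z) (\<phi> z + tent a r (\<phi> z) *\<^sub>R v) \<subseteq> cball a (2 * r) \<inter> S"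
    using segment_subset_cball_subspace[OF subspace_S push_in_chart(1)[OF assms] v \<open>norm v \<le> r\<close>]
      tent_bounds[OF \<open>r > 0\<close>] by blast
  then show "closed_segment (\<phi> z) (\<phi> z + tent a r (\<phi> z) *\<^sub>R v) \<subseteq> cball a (2 * r)"
    and "\<psi> ` closed_segment (\<phi> z) (\<phi> z + tent a r (\<phi> z) *\<^sub>R v) \<subseteq> M"
    using ball_V psi_in_chart by blast+
qed

lemma push_maps_into: "z \<in> M \<Longrightarrow> push a v r z \<in> M"
proof (cases "z \<in> U \<and> \<phi> z \<in> cball a r")
  case True
  then show "push a v r z \<in> M" if "z \<in> M"
    using that push_in_chart(3) push_segment(2) ends_in_segment(2) by blast
qed (use push_eq_id in auto)

lemma riem_dist_push_less:
  assumes lip: "L-lipschitz_on (cball a (2 * r)) \<psi>" and small: "L * norm v < \<eta>" and "z \<in> M"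
  shows "riem_dist M z (push a v r z) < ereal \<eta>"
proof (cases "z \<in> U \<and> \<phi> z \<in> cball a r")
  case True
  let ?y = "\<phi> z"
  have "riem_dist M (\<psi> ?y) (\<psi> (?y + tent a r ?y *\<^sub>R v)) \<le> ereal (L * dist ?y (?y + tent a r ?y *\<^sub>R v))"
    using True \<open>z \<in> M\<close> by (intro riem_dist_lipschitz_image_le[OF lip] push_segment) auto
  also have "L * dist ?y (?y + tent a r ?y *\<^sub>R v) \<le> L * norm v"
    using tent_bounds[OF \<open>r > 0\<close>, of a ?y] lipschitz_on_nonneg[OF lip]
    by (intro mult_left_mono) (auto simp: dist_norm mult_left_le_one_le)
  finally have "riem_dist M z (push a v r z) \<le> ereal (L * norm v)"
    using True \<open>z \<in> M\<close> push_in_chart(2,3) by simp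
  also have "\<dots> < ereal \<eta>"
    using small by simp
  finally show ?thesis .
next
  case False
  have "0 < \<eta>"
    using small lipschitz_on_nonneg[OF lip] by (smt (verit) norm_ge_zero zero_le_mult_iff)
  then show ?thesis
    using False push_eq_id riem_dist_self[OF \<open>z \<in> M\<close>] by (simp add: zero_ereal_def)
qed

lemma push_displacement_in_V: "z \<in> U \<inter> M \<Longrightarrow> \<phi> z + tent a r (\<phi> z) *\<^sub>R v \<in> V"
proof (cases "\<phi> z \<in> cball a r")
  case True
  then show "\<phi> z + tent a r (\<phi> z) *\<^sub>R v \<in> V" if "z \<in> U \<inter> M"
    using push_segment(1)[OF that] ends_in_segment(2) ball_V by blast
next
  case False
  then show "\<phi> z + tent a r (\<phi> z) *\<^sub>R v \<in> V" if "z \<in> U \<inter> M"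
    using that phi_in_V tent_outside[OF \<open>r > 0\<close> False] by simp
qed

lemma continuous_on_push_in_chart: "continuous_on (M \<inter> U) (\<lambda>z. \<psi> (\<phi> z + tent a r (\<phi> z) *\<^sub>R v))"
proof (rule continuous_on_compose2[OF continuous_psi])
  show "continuous_on (M \<inter> U) (\<lambda>z. \<phi> z + tent a r (\<phi> z) *\<^sub>R v)"
    unfolding tent_def using continuous_on_subset[OF continuous_phi] \<open>r > 0\<close>
    by (intro continuous_intros) auto
  show "(\<lambda>z. \<phi> z + tent a r (\<phi> z) *\<^sub>R v) ` (M \<inter> U) \<subseteq> V"
    using push_displacement_in_V by blast
qed

lemma continuous_on_push: "continuous_on M (push a v r)"
proof -
  define K where "K = \<psi> ` (cball a r \<inter> S)"
  have small_ball: "cball a r \<inter> S \<subseteq> cball a (2 * r)"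
    using \<open>r > 0\<close> by auto
  have "compact K"
    unfolding K_def
    using continuous_on_subset[OF continuous_psi order_trans[OF small_ball ball_V]] subspace_S
    by (intro compact_continuous_image compact_Int_closed closed_subspace compact_cball)
  have M_split: "M = (M \<inter> U) \<union> (M - K)"
    unfolding K_def using small_ball ball_V psi_in_chart by blast
  have "continuous_on (M \<inter> U) (push a v r)"
    using continuous_on_push_in_chart by (rule continuous_on_eq) (simp add: push_def)
  moreover have "continuous_on (M - K) (push a v r)"
  proof (rule continuous_on_eq[OF continuous_on_id])
    fix z assume "z \<in> M - K"
    then have "z \<notin> U \<or> \<phi> z \<notin> cball a r"
      using push_in_chart(1,2)[of z] unfolding K_def by (metis DiffD1 DiffD2 IntI image_eqI)
    then show "z = push a v r z"
      using push_eq_id by simp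
  qed
  moreover have "openin (top_of_set M) (M \<inter> U)"
    using open_U by (rule openin_open_Int)
  moreover have "openin (top_of_set M) (M - K)"
    using openin_open_Int[of "- K" M] compact_imp_closed[OF \<open>compact K\<close>]
    by (simp add: Diff_eq open_Compl)
  ultimately have "continuous_on ((M \<inter> U) \<union> (M - K)) (push a v r)"
    using M_split by (intro continuous_on_Un_local_open) auto
  then show ?thesis using M_split by simp
qed

lemma push_centre: "push a v r (\<psi> a) = \<psi> (a + v)"
proof -
  have "a \<in> V \<inter> S"
    using a ball_V \<open>r > 0\<close> by auto
  then show ?thesis
    using psi_in_chart \<open>r > 0\<close> by (simp add: push_def tent_def)
qed

end

lemma near_identity_map_in_chart:
  assumes ball: "cball c R \<subseteq> V" and lip: "L-lipschitz_on (cball c R) \<psi>" and "L > 0"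
    and p: "p \<in> U \<inter> M" "dist c (\<phi> p) < \<tau>" and q: "q \<in> U \<inter> M" "dist c (\<phi> q) < \<tau>"
    and "6 * \<tau> \<le> R" "2 * L * \<tau> \<le> \<eta>"
  shows "\<exists>\<Phi>. near_identity M \<eta> \<Phi> \<and> \<Phi> p = q"
proof -
  define a where "a = \<phi> p"
  define v where "v = \<phi> q - \<phi> p"
  define r where "r = R / 3"
  have "a \<in> S" "v \<in> S"
    using p q phi_in_S subspace_S by (auto simp: a_def v_def intro: subspace_diff)
  have "norm v < 2 * \<tau>"
    using p(2) q(2) dist_triangle[of a "\<phi> q" c]
    by (simp add: v_def a_def dist_norm dist_commute norm_minus_commute)
  then have "norm v \<le> r"
    using assms(8) unfolding r_def by linarith
  have "L * norm v < \<eta>"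
    using mult_strict_left_mono[OF \<open>norm v < 2 * \<tau>\<close> \<open>L > 0\<close>] assms(9) by linarith
  have "r > 0"
    using p(2) assms(8) zero_le_dist[of c "\<phi> p"] unfolding r_def by linarith
  have "cball a (2 * r) \<subseteq> cball c R"
  proof
    fix y assume "y \<in> cball a (2 * r)"
    then have "dist c y \<le> dist c a + 2 * r"
      using dist_triangle[of c y a] by simp
    then show "y \<in> cball c R"
      using p(2) assms(8) zero_le_dist[of c "\<phi> p"] unfolding mem_cball r_def a_def by linarith
  qed
  note push_facts = \<open>a \<in> S\<close> \<open>v \<in> S\<close> \<open>r > 0\<close> \<open>norm v \<le> r\<close> order_trans[OF this ball]
  have "near_identity M \<eta> (push a v r)"
    unfolding near_identity_def
    using continuous_on_push[OF push_facts] push_maps_into[OF push_facts]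
      riem_dist_push_less[OF push_facts lipschitz_on_subset[OF lip] \<open>L * norm v < \<eta>\<close>]
      \<open>cball a (2 * r) \<subseteq> cball c R\<close>
    by blast
  moreover have "push a v r p = q"
    using push_centre[OF push_facts] p q psi_phi by (simp add: a_def v_def)
  ultimately show ?thesis by blast
qed

lemma near_identity_maps_local:
  assumes p0: "p0 \<in> U \<inter> M" and "\<eta> > 0"
  shows "\<exists>N. open N \<and> p0 \<in> N \<and> (\<forall>p\<in>M \<inter> N. \<forall>q\<in>M \<inter> N. \<exists>\<Phi>. near_identity M \<eta> \<Phi> \<and> \<Phi> p = q)"
proof -
  obtain R where "R > 0" and ball: "cball (\<phi> p0) R \<subseteq> V"
    using open_V phi_in_V[OF p0] open_contains_cball by blast
  obtain L where "L > 0" and lip: "L-lipschitz_on (cball (\<phi> p0) R) \<psi>"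
    using C1_lipschitz_on_cball[OF C1_psi open_V ball] by blast
  define \<tau> where "\<tau> = min (R / 6) (\<eta> / (2 * L))"
  have "\<tau> > 0" "6 * \<tau> \<le> R" "\<tau> \<le> \<eta> / (2 * L)"
    using \<open>R > 0\<close> \<open>L > 0\<close> \<open>\<eta> > 0\<close> by (auto simp: \<tau>_def)
  then have "2 * L * \<tau> \<le> \<eta>"
    using \<open>L > 0\<close> by (simp add: field_simps)
  define N where "N = U \<inter> \<phi> -` ball (\<phi> p0) \<tau>"
  have "open N"
    unfolding N_def by (rule continuous_open_preimage[OF continuous_phi open_U open_ball])
  moreover have "p0 \<in> N"
    using p0 \<open>\<tau> > 0\<close> by (simp add: N_def)
  moreover have "\<exists>\<Phi>. near_identity M \<eta> \<Phi> \<and> \<Phi> p = q" if "p \<in> M \<inter> N" "q \<in> M \<inter> N" for p q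
  proof (rule near_identity_map_in_chart[OF ball lip \<open>L > 0\<close> _ _ _ _ \<open>6 * \<tau> \<le> R\<close> \<open>2 * L * \<tau> \<le> \<eta>\<close>])
    show "p \<in> U \<inter> M" "dist (\<phi> p0) (\<phi> p) < \<tau>" "q \<in> U \<inter> M" "dist (\<phi> p0) (\<phi> q) < \<tau>"
      using that by (auto simp: N_def)
  qed
  ultimately show ?thesis by blast
qed
end

lemma near_identity_maps_uniform:
  fixes M :: "'a::euclidean_space set"
  assumes "smooth_submanifold k M" "compact M" "\<eta> > 0"
  obtains \<rho> where "\<rho> > 0"
    "\<And>p q. p \<in> M \<Longrightarrow> q \<in> M \<Longrightarrow> dist p q < \<rho> \<Longrightarrow> \<exists>\<Phi>. near_identity M \<eta> \<Phi> \<and> \<Phi> p = q"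
proof -
  define homogeneous where
    "homogeneous N \<longleftrightarrow> (\<forall>p\<in>M \<inter> N. \<forall>q\<in>M \<inter> N. \<exists>\<Phi>. near_identity M \<eta> \<Phi> \<and> \<Phi> p = q)" for N
  have "M \<subseteq> \<Union>{N. open N \<and> homogeneous N}"
  proof
    fix p0 assume "p0 \<in> M"
    then obtain U V \<phi> \<psi> S where chart: "flat_chart M U V \<phi> \<psi> S" and "p0 \<in> U"
      by (rule smooth_submanifold_chart[OF assms(1)])
    have "\<exists>N. open N \<and> p0 \<in> N \<and> homogeneous N"
      unfolding homogeneous_def
      by (rule flat_chart.near_identity_maps_local[OF chart IntI[OF \<open>p0 \<in> U\<close> \<open>p0 \<in> M\<close>] assms(3)])
    then show "p0 \<in> \<Union>{N. open N \<and> homogeneous N}"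
      by blast
  qed
  then obtain \<rho> where "\<rho> > 0" and lebesgue: "\<And>x. x \<in> M \<Longrightarrow> \<exists>G. homogeneous G \<and> ball x \<rho> \<subseteq> G"
    using Heine_Borel_lemma[OF assms(2)] by (metis (no_types, lifting) mem_Collect_eq)
  show thesis
  proof (rule that[OF \<open>\<rho> > 0\<close>])
    fix p q assume "p \<in> M" "q \<in> M" "dist p q < \<rho>"
    obtain G where "homogeneous G" "ball p \<rho> \<subseteq> G"
      using lebesgue[OF \<open>p \<in> M\<close>] by blast
    moreover have "p \<in> ball p \<rho>" "q \<in> ball p \<rho>"
      using \<open>\<rho> > 0\<close> \<open>dist p q < \<rho>\<close> by auto
    ultimately show "\<exists>\<Phi>. near_identity M \<eta> \<Phi> \<and> \<Phi> p = q"
      using \<open>p \<in> M\<close> \<open>q \<in> M\<close> unfolding homogeneous_def by blast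
  qed
qed

lemma riem_dist_uniformly_dominated:
  fixes M :: "'a::euclidean_space set"
  assumes "smooth_submanifold k M" "compact M" "e > 0"
  shows "\<exists>\<rho>>0. \<forall>p\<in>M. \<forall>q\<in>M. dist p q < \<rho> \<longrightarrow> riem_dist M p q < ereal e"
proof -
  obtain \<rho> where "\<rho> > 0"
    and push: "\<And>p q. p \<in> M \<Longrightarrow> q \<in> M \<Longrightarrow> dist p q < \<rho> \<Longrightarrow> \<exists>\<Phi>. near_identity M e \<Phi> \<and> \<Phi> p = q"
    by (rule near_identity_maps_uniform[OF assms]) auto
  show ?thesis
    using \<open>\<rho> > 0\<close> push unfolding near_identity_def by metis
qed

section \<open>Finite perturbations of an IFS\<close>

lemma is_IFS_continuous_on:
  assumes "is_IFS M \<Lambda> \<omega>" "l \<in> \<Lambda>"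
  shows "continuous_on M (\<omega> l)"
proof -
  have cont: "continuous_on (\<Lambda> \<times> M) (\<lambda>(l, x). \<omega> l x)"
    using assms(1) unfolding is_IFS_def by blast
  have "continuous_on M (\<lambda>x. (\<lambda>(l, x). \<omega> l x) (l, x))"
    by (rule continuous_on_compose2[OF cont]) (use assms(2) in \<open>auto intro: continuous_intros\<close>)
  then show ?thesis by simp
qed

lemma omega_seq_self_map:
  assumes "\<And>k. continuous_on M (\<omega> (\<sigma> k)) \<and> \<omega> (\<sigma> k) ` M \<subseteq> M"
  shows "continuous_on M (omega_seq \<omega> \<sigma> k) \<and> omega_seq \<omega> \<sigma> k ` M \<subseteq> M"
proof (induction k)
  case (Suc k)
  then have "continuous_on M (\<omega> (\<sigma> k) \<circ> omega_seq \<omega> \<sigma> k)"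
    using assms continuous_on_compose continuous_on_subset by metis
  with Suc assms show ?case by (auto simp: image_subset_iff)
qed (simp add: continuous_on_id)

lemma dC0_le: "(\<And>z. z \<in> M \<Longrightarrow> d (f z) (g z) \<le> e) \<Longrightarrow> dC0 M d f g \<le> e"
  unfolding dC0_def by (rule SUP_least)

lemma dH_le:
  assumes "\<And>l. l \<in> \<Lambda> \<Longrightarrow> \<exists>l'\<in>\<Lambda>'. dC0 M d (\<omega> l) (\<omega>' l') \<le> e"
    and "\<And>l'. l' \<in> \<Lambda>' \<Longrightarrow> \<exists>l\<in>\<Lambda>. dC0 M d (\<omega> l) (\<omega>' l') \<le> e"
  shows "dH M d \<Lambda> \<omega> \<Lambda>' \<omega>' \<le> e"
  unfolding dH_def using assms
  by (intro max.boundedI SUP_least) (meson INF_lower2)+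

lemma is_IFS_finite_net:
  fixes M :: "'a::metric_space set"
  assumes "is_IFS M \<Lambda> \<omega>" "compact M" "\<delta> > 0"
    and dominated: "\<And>e. e > 0 \<Longrightarrow> \<exists>\<rho>>0. \<forall>p\<in>M. \<forall>q\<in>M. dist p q < \<rho> \<longrightarrow> d p q < ereal e"
  obtains cs where "set cs \<subseteq> \<Lambda>" "\<And>l. l \<in> \<Lambda> \<Longrightarrow> \<exists>c\<in>set cs. dC0 M d (\<omega> l) (\<omega> c) < ereal \<delta>"
proof -
  obtain \<rho> where "\<rho> > 0" and close: "\<forall>p\<in>M. \<forall>q\<in>M. dist p q < \<rho> \<longrightarrow> d p q < ereal (\<delta> / 2)"
    using dominated[of "\<delta> / 2"] \<open>\<delta> > 0\<close> by auto
  have "uniformly_continuous_on (\<Lambda> \<times> M) (\<lambda>(l, x). \<omega> l x)"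
    using assms(1,2) unfolding is_IFS_def by (intro compact_uniformly_continuous compact_Times) auto
  then obtain \<alpha> where "\<alpha> > 0" and uc: "\<And>u u'. u \<in> \<Lambda> \<times> M \<Longrightarrow> u' \<in> \<Lambda> \<times> M \<Longrightarrow> dist u' u < \<alpha> \<Longrightarrow>
      dist ((\<lambda>(l, x). \<omega> l x) u') ((\<lambda>(l, x). \<omega> l x) u) < \<rho>"
    unfolding uniformly_continuous_on_def using \<open>\<rho> > 0\<close> by metis
  have "\<Lambda> \<subseteq> (\<Union>c\<in>\<Lambda>. ball c \<alpha>)"
    using \<open>\<alpha> > 0\<close> by force
  then obtain K where "K \<subseteq> \<Lambda>" "finite K" and cover: "\<Lambda> \<subseteq> (\<Union>c\<in>K. ball c \<alpha>)"
    using compactE_image[of \<Lambda>] assms(1) unfolding is_IFS_def by (metis open_ball)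
  obtain cs where "set cs = K"
    using finite_list[OF \<open>finite K\<close>] by blast
  show thesis
  proof (rule that)
    show "set cs \<subseteq> \<Lambda>" using \<open>set cs = K\<close> \<open>K \<subseteq> \<Lambda>\<close> by simp
    fix l assume "l \<in> \<Lambda>"
    then obtain c where "c \<in> K" "dist c l < \<alpha>"
      using cover by auto
    have "d (\<omega> l z) (\<omega> c z) \<le> ereal (\<delta> / 2)" if "z \<in> M" for z
    proof -
      have "\<omega> l z \<in> M" "\<omega> c z \<in> M"
        using assms(1) \<open>l \<in> \<Lambda>\<close> \<open>c \<in> K\<close> \<open>K \<subseteq> \<Lambda>\<close> that unfolding is_IFS_def by auto
      moreover have "dist (\<omega> l z) (\<omega> c z) < \<rho>"
        using uc[of "(l, z)" "(c, z)"] \<open>l \<in> \<Lambda>\<close> \<open>c \<in> K\<close> \<open>K \<subseteq> \<Lambda>\<close> that \<open>dist c l < \<alpha>\<close>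
        by (auto simp: dist_Pair_Pair dist_commute)
      ultimately show ?thesis
        using close less_imp_le by blast
    qed
    then have "dC0 M d (\<omega> l) (\<omega> c) < ereal \<delta>"
      using \<open>\<delta> > 0\<close> by (intro order_le_less_trans[OF dC0_le]) auto
    then show "\<exists>c\<in>set cs. dC0 M d (\<omega> l) (\<omega> c) < ereal \<delta>"
      using \<open>set cs = K\<close> \<open>c \<in> K\<close> by blast
  qed
qed

text \<open>Perturbing IFSs are parametrised by compact subsets of \<open>nat \<Rightarrow> real\<close>; a finite family
  \<open>G 0, \<dots>, G (N - 1)\<close> is realised on the constant sequences \<open>nat_param i\<close>.\<close>

definition nat_param :: "nat \<Rightarrow> nat \<Rightarrow> real" where
  "nat_param i = (\<lambda>_. real i)"

definition family_IFS :: "(nat \<Rightarrow> 'a \<Rightarrow> 'a) \<Rightarrow> (nat \<Rightarrow> real) \<Rightarrow> 'a \<Rightarrow> 'a" where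
  "family_IFS G l = G (nat \<lfloor>l 0\<rfloor>)"

lemma family_IFS_nat_param [simp]: "family_IFS G (nat_param i) = G i"
  by (simp add: family_IFS_def nat_param_def)

lemma is_IFS_family:
  fixes M :: "'a::topological_space set"
  assumes "closed M" and maps: "\<And>i. i < N \<Longrightarrow> continuous_on M (G i) \<and> G i ` M \<subseteq> M"
  shows "is_IFS M (nat_param ` {..<N}) (family_IFS G)"
proof -
  have "continuous_on ({nat_param i} \<times> M) (\<lambda>(l, x). family_IFS G l x)" if "i < N" for i
  proof -
    have "continuous_on ({nat_param i} \<times> M) (G i \<circ> snd)"
      using maps[OF that] by (intro continuous_on_compose continuous_intros) auto
    then show ?thesis by (rule continuous_on_eq) auto
  qed
  then have "continuous_on (\<Union>i\<in>{..<N}. {nat_param i} \<times> M) (\<lambda>(l, x). family_IFS G l x)"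
    using \<open>closed M\<close> by (intro continuous_on_closed_Union closed_Times closed_singleton) auto
  moreover have "(\<Union>i\<in>{..<N}. {nat_param i} \<times> M) = nat_param ` {..<N} \<times> M"
    by auto
  ultimately show ?thesis
    unfolding is_IFS_def using maps by (auto intro: finite_imp_compact)
qed

lemma dH_family_le:
  assumes "\<And>l. l \<in> \<Lambda> \<Longrightarrow> \<exists>i<N. dC0 M d (\<omega> l) (G i) \<le> e"
    and "\<And>i. i < N \<Longrightarrow> \<exists>l\<in>\<Lambda>. dC0 M d (\<omega> l) (G i) \<le> e"
  shows "dH M d \<Lambda> \<omega> (nat_param ` {..<N}) (family_IFS G) \<le> e"
proof (rule dH_le)
  fix l assume "l \<in> \<Lambda>"
  then obtain i where "i < N" "dC0 M d (\<omega> l) (G i) \<le> e"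
    using assms(1) by blast
  then show "\<exists>l'\<in>nat_param ` {..<N}. dC0 M d (\<omega> l) (family_IFS G l') \<le> e"
    by (intro bexI[of _ "nat_param i"]) auto
next
  fix l' assume "l' \<in> nat_param ` {..<N}"
  then obtain i where "i < N" "l' = nat_param i"
    by blast
  then show "\<exists>l\<in>\<Lambda>. dC0 M d (\<omega> l) (family_IFS G l') \<le> e"
    using assms(2) by simp
qed

text \<open>The perturbing IFS consists of the maps \<open>g k\<close> for \<open>k < n\<close> followed by a finite net of
  \<open>\<omega>\<close>; the net makes it Hausdorff-close to \<open>\<omega>\<close>, and after time \<open>n\<close> the compatible
  sequence \<open>\<sigma>'\<close> follows the net.\<close>

lemma finite_perturbed_IFS:
  fixes M :: "'a::topological_space set" and d :: "'a \<Rightarrow> 'a \<Rightarrow> ereal" and n :: nat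
  assumes IFS: "is_IFS M \<Lambda> \<omega>" and "closed M" and refl: "\<And>x. x \<in> M \<Longrightarrow> d x x = 0" and "\<delta> > 0"
    and cs: "set cs \<subseteq> \<Lambda>" and net: "\<And>l. l \<in> \<Lambda> \<Longrightarrow> \<exists>c\<in>set cs. dC0 M d (\<omega> l) (\<omega> c) < ereal \<delta>"
    and \<sigma>: "\<And>k. \<sigma> k \<in> \<Lambda>"
    and g: "\<And>k. k < n \<Longrightarrow> continuous_on M (g k) \<and> g k ` M \<subseteq> M \<and> dC0 M d (\<omega> (\<sigma> k)) (g k) < ereal \<delta>"
  obtains \<Lambda>' :: "(nat \<Rightarrow> real) set" and \<omega>' \<sigma>'
  where "is_IFS M \<Lambda>' \<omega>'" "dH M d \<Lambda> \<omega> \<Lambda>' \<omega>' \<le> ereal \<delta>"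
    "\<forall>k. \<sigma>' k \<in> \<Lambda>'" "\<forall>k. dC0 M d (\<omega> (\<sigma> k)) (\<omega>' (\<sigma>' k)) < ereal \<delta>"
    "\<forall>k<n. \<omega>' (\<sigma>' k) = g k"
proof -
  define G where "G i = (if i < n then g i else \<omega> (cs ! (i - n)))" for i
  define N where "N = n + length cs"
  have cs_nth: "cs ! i \<in> \<Lambda>" if "i < length cs" for i
    using cs that by auto
  have "\<exists>j<length cs. dC0 M d (\<omega> (\<sigma> k)) (\<omega> (cs ! j)) < ereal \<delta>" for k
    using net[OF \<sigma>[of k]] by (auto simp: in_set_conv_nth)
  then obtain idx where idx: "\<And>k. idx k < length cs \<and> dC0 M d (\<omega> (\<sigma> k)) (\<omega> (cs ! idx k)) < ereal \<delta>"
    by metis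
  define \<sigma>' where "\<sigma>' k = nat_param (if k < n then k else n + idx k)" for k
  have "continuous_on M (G i) \<and> G i ` M \<subseteq> M" if "i < N" for i
  proof (cases "i < n")
    case False
    then have "cs ! (i - n) \<in> \<Lambda>"
      using \<open>i < N\<close> cs_nth by (simp add: N_def)
    then show ?thesis
      using False is_IFS_continuous_on[OF IFS] IFS unfolding G_def is_IFS_def by auto
  qed (use g G_def in auto)
  then have "is_IFS M (nat_param ` {..<N}) (family_IFS G)"
    by (rule is_IFS_family[OF \<open>closed M\<close>])
  moreover have "dH M d \<Lambda> \<omega> (nat_param ` {..<N}) (family_IFS G) \<le> ereal \<delta>"
  proof (rule dH_family_le)
    fix l assume "l \<in> \<Lambda>"
    then obtain j where "j < length cs" "dC0 M d (\<omega> l) (\<omega> (cs ! j)) < ereal \<delta>"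
      using net[OF \<open>l \<in> \<Lambda>\<close>] by (auto simp: in_set_conv_nth)
    then show "\<exists>i<N. dC0 M d (\<omega> l) (G i) \<le> ereal \<delta>"
      by (intro exI[of _ "n + j"]) (simp add: G_def N_def)
  next
    fix i assume "i < N"
    have self_close: "dC0 M d (\<omega> c) (\<omega> c) \<le> ereal \<delta>" if "c \<in> \<Lambda>" for c
      using IFS that refl \<open>\<delta> > 0\<close> unfolding is_IFS_def by (intro dC0_le) (simp add: zero_ereal_def)
    show "\<exists>l\<in>\<Lambda>. dC0 M d (\<omega> l) (G i) \<le> ereal \<delta>"
    proof (cases "i < n")
      case True
      then show ?thesis
        using g[OF True] \<sigma>[of i] by (intro bexI[of _ "\<sigma> i"]) (auto simp: G_def)
    next
      case False
      then have "cs ! (i - n) \<in> \<Lambda>"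
        using \<open>i < N\<close> cs_nth by (simp add: N_def)
      with False show ?thesis
        using self_close by (intro bexI[of _ "cs ! (i - n)"]) (auto simp: G_def)
    qed
  qed
  moreover have "\<forall>k. \<sigma>' k \<in> nat_param ` {..<N}"
    using idx by (auto simp: \<sigma>'_def N_def)
  moreover have "\<forall>k. dC0 M d (\<omega> (\<sigma> k)) (family_IFS G (\<sigma>' k)) < ereal \<delta>"
    using g idx by (simp add: \<sigma>'_def G_def)
  moreover have "\<forall>k<n. family_IFS G (\<sigma>' k) = g k"
    by (simp add: \<sigma>'_def G_def)
  ultimately show thesis
    by (rule that)
qed

section \<open>Shadowing\<close>

definition perturbed_orbit ::
    "'a::topological_space set \<Rightarrow> ('a \<Rightarrow> 'a \<Rightarrow> ereal) \<Rightarrow> ('l \<Rightarrow> 'a \<Rightarrow> 'a) \<Rightarrow> real \<Rightarrow> (nat \<Rightarrow> 'l) \<Rightarrow> (nat \<Rightarrow> 'a \<Rightarrow> 'a) \<Rightarrow> (nat \<Rightarrow> 'a) \<Rightarrow> bool"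
  where "perturbed_orbit M d \<omega> \<delta> \<sigma> g x \<longleftrightarrow> x 0 \<in> M \<and>
    (\<forall>k. continuous_on M (g k) \<and> g k ` M \<subseteq> M \<and> dC0 M d (\<omega> (\<sigma> k)) (g k) \<le> ereal \<delta> \<and> g k (x k) = x (Suc k))"

lemma perturbed_orbit_mono:
  "perturbed_orbit M d \<omega> \<delta> \<sigma> g x \<Longrightarrow> \<delta> \<le> \<delta>' \<Longrightarrow> perturbed_orbit M d \<omega> \<delta>' \<sigma> g x"
  unfolding perturbed_orbit_def by (meson ereal_less_eq(3) order_trans)

lemma topologically_stable_finite_tracing:
  fixes M :: "'a::metric_space set" and d :: "'a \<Rightarrow> 'a \<Rightarrow> ereal"
  assumes stable: "topologically_stable M d \<Lambda> \<omega>" and IFS: "is_IFS M \<Lambda> \<omega>" and "compact M"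
    and refl: "\<And>x. x \<in> M \<Longrightarrow> d x x = 0"
    and dominated: "\<And>e. e > 0 \<Longrightarrow> \<exists>\<rho>>0. \<forall>p\<in>M. \<forall>q\<in>M. dist p q < \<rho> \<longrightarrow> d p q < ereal e"
    and "\<epsilon> > 0"
  obtains \<delta> where "\<delta> > 0"
    "\<And>\<sigma> g x n. \<forall>k. \<sigma> k \<in> \<Lambda> \<Longrightarrow> perturbed_orbit M d \<omega> \<delta> \<sigma> g x \<Longrightarrow>
       \<exists>z\<in>M. \<forall>k\<le>n. d (omega_seq \<omega> \<sigma> k z) (x k) < ereal \<epsilon>"
proof -
  from stable[unfolded topologically_stable_def, rule_format, OF \<open>\<epsilon> > 0\<close>]
  obtain \<delta> where "\<delta> > 0" and ST: "\<forall>(\<Lambda>'::(nat \<Rightarrow> real) set) \<omega>'.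
      is_IFS M \<Lambda>' \<omega>' \<and> dH M d \<Lambda> \<omega> \<Lambda>' \<omega>' \<le> ereal \<delta> \<longrightarrow>
      (\<forall>\<sigma> \<sigma>'. (\<forall>k. \<sigma> k \<in> \<Lambda> \<and> \<sigma>' k \<in> \<Lambda>') \<and> (\<forall>k. dC0 M d (\<omega> (\<sigma> k)) (\<omega>' (\<sigma>' k)) < ereal \<delta>) \<longrightarrow>
         (\<exists>h. continuous_on M h \<and> h ` M \<subseteq> M \<and>
              (\<forall>k. dC0 M d (omega_seq \<omega> \<sigma> k \<circ> h) (omega_seq \<omega>' \<sigma>' k) < ereal \<epsilon>) \<and>
              dC0 M d h id < ereal \<epsilon>))"
    by blast
  have "\<delta> / 2 > 0" and half_less: "ereal (\<delta> / 2) < ereal \<delta>"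
    using \<open>\<delta> > 0\<close> by simp_all
  obtain cs where cs: "set cs \<subseteq> \<Lambda>" and net: "\<And>l. l \<in> \<Lambda> \<Longrightarrow> \<exists>c\<in>set cs. dC0 M d (\<omega> l) (\<omega> c) < ereal \<delta>"
    by (rule is_IFS_finite_net[OF IFS \<open>compact M\<close> \<open>\<delta> > 0\<close> dominated]) auto
  show thesis
  proof (rule that[OF \<open>\<delta> / 2 > 0\<close>])
    fix \<sigma> g x and n :: nat
    assume \<sigma>: "\<forall>k. \<sigma> k \<in> \<Lambda>" and "perturbed_orbit M d \<omega> (\<delta> / 2) \<sigma> g x"
    then have "x 0 \<in> M" and g: "\<forall>k. continuous_on M (g k) \<and> g k ` M \<subseteq> M \<and>
        dC0 M d (\<omega> (\<sigma> k)) (g k) < ereal \<delta> \<and> g k (x k) = x (Suc k)"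
      unfolding perturbed_orbit_def using half_less by (auto intro: order_le_less_trans)
    obtain \<Lambda>' :: "(nat \<Rightarrow> real) set" and \<omega>' \<sigma>' where "is_IFS M \<Lambda>' \<omega>'" "dH M d \<Lambda> \<omega> \<Lambda>' \<omega>' \<le> ereal \<delta>"
      "\<forall>k. \<sigma>' k \<in> \<Lambda>'" "\<forall>k. dC0 M d (\<omega> (\<sigma> k)) (\<omega>' (\<sigma>' k)) < ereal \<delta>"
      and follows_g: "\<forall>k<n. \<omega>' (\<sigma>' k) = g k"
      by (rule finite_perturbed_IFS[OF IFS compact_imp_closed[OF \<open>compact M\<close>] refl \<open>\<delta> > 0\<close> cs net,
            where \<sigma> = \<sigma> and g = g and n = n]) (use \<sigma> g in auto)
    with ST \<sigma> obtain h where "h ` M \<subseteq> M"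
      and h: "\<And>k. dC0 M d (omega_seq \<omega> \<sigma> k \<circ> h) (omega_seq \<omega>' \<sigma>' k) < ereal \<epsilon>"
      by meson
    have orbit: "omega_seq \<omega>' \<sigma>' k (x 0) = x k" if "k \<le> n" for k
      using that g by (induction k) (auto simp: follows_g)
    show "\<exists>z\<in>M. \<forall>k\<le>n. d (omega_seq \<omega> \<sigma> k z) (x k) < ereal \<epsilon>"
    proof (intro bexI[of _ "h (x 0)"] allI impI)
      fix k assume "k \<le> n"
      have "d (omega_seq \<omega> \<sigma> k (h (x 0))) (omega_seq \<omega>' \<sigma>' k (x 0))
          \<le> dC0 M d (omega_seq \<omega> \<sigma> k \<circ> h) (omega_seq \<omega>' \<sigma>' k)"
        unfolding dC0_def using \<open>x 0 \<in> M\<close> by (auto intro: SUP_upper2)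
      with h[of k] orbit[OF \<open>k \<le> n\<close>] show "d (omega_seq \<omega> \<sigma> k (h (x 0))) (x k) < ereal \<epsilon>"
        by simp
    qed (use \<open>x 0 \<in> M\<close> \<open>h ` M \<subseteq> M\<close> in blast)
  qed
qed

lemma delta_chain_perturbed_orbit:
  fixes M :: "'a::euclidean_space set"
  assumes IFS: "is_IFS M \<Lambda> \<omega>" and chain: "is_delta_chain M (riem_dist M) \<Lambda> \<omega> \<delta> x" and "\<delta> < \<rho>"
    and push: "\<And>p q. p \<in> M \<Longrightarrow> q \<in> M \<Longrightarrow> dist p q < \<rho> \<Longrightarrow> \<exists>\<Phi>. near_identity M \<eta> \<Phi> \<and> \<Phi> p = q"
  obtains \<sigma> g where "\<forall>k. \<sigma> k \<in> \<Lambda>" "perturbed_orbit M (riem_dist M) \<omega> \<eta> \<sigma> g x"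
proof -
  obtain \<sigma> where \<sigma>: "\<And>k. \<sigma> k \<in> \<Lambda>" "\<And>k. riem_dist M (x (Suc k)) (\<omega> (\<sigma> k) (x k)) \<le> ereal \<delta>"
    using chain unfolding is_delta_chain_def by metis
  have xM: "x k \<in> M" for k
    using chain unfolding is_delta_chain_def by blast
  have \<omega>M: "\<omega> (\<sigma> k) z \<in> M" if "z \<in> M" for k z
    using IFS \<sigma>(1) that unfolding is_IFS_def by blast
  have "\<exists>\<Phi>. near_identity M \<eta> \<Phi> \<and> \<Phi> (\<omega> (\<sigma> k) (x k)) = x (Suc k)" for k
  proof (rule push[OF \<omega>M[OF xM] xM])
    have "ereal (dist (x (Suc k)) (\<omega> (\<sigma> k) (x k))) \<le> ereal \<delta>"
      using dist_le_riem_dist \<sigma>(2) order_trans by blast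
    then show "dist (\<omega> (\<sigma> k) (x k)) (x (Suc k)) < \<rho>"
      using \<open>\<delta> < \<rho>\<close> by (simp add: dist_commute)
  qed
  then obtain \<Phi> where \<Phi>: "\<And>k. near_identity M \<eta> (\<Phi> k)" "\<And>k. \<Phi> k (\<omega> (\<sigma> k) (x k)) = x (Suc k)"
    by metis
  define g where "g k = \<Phi> k \<circ> \<omega> (\<sigma> k)" for k
  have "continuous_on M (g k) \<and> g k ` M \<subseteq> M \<and> dC0 M (riem_dist M) (\<omega> (\<sigma> k)) (g k) \<le> ereal \<eta> \<and>
      g k (x k) = x (Suc k)" for k
  proof (intro conjI)
    have "\<omega> (\<sigma> k) ` M \<subseteq> M"
      using \<omega>M by blast
    then show "continuous_on M (g k)" "g k ` M \<subseteq> M"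
      using \<Phi>(1) is_IFS_continuous_on[OF IFS \<sigma>(1)] unfolding near_identity_def g_def
      by (metis continuous_on_compose continuous_on_subset, metis image_comp image_mono order_trans)
    show "dC0 M (riem_dist M) (\<omega> (\<sigma> k)) (g k) \<le> ereal \<eta>"
      using \<Phi>(1) \<omega>M unfolding near_identity_def g_def by (intro dC0_le) (simp add: less_imp_le)
    show "g k (x k) = x (Suc k)"
      using \<Phi>(2) by (simp add: g_def)
  qed
  with \<sigma>(1) xM show thesis
    by (intro that[of \<sigma> g]) (auto simp: perturbed_orbit_def)
qed

lemma shadowing_chain_of_finite_tracings:
  fixes M :: "'a::euclidean_space set"
  assumes "compact M" and IFS: "is_IFS M \<Lambda> \<omega>" and \<sigma>: "\<And>k. \<sigma> k \<in> \<Lambda>" and "\<rho> > 0"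
    and close: "\<And>p q. p \<in> M \<Longrightarrow> q \<in> M \<Longrightarrow> dist p q < \<rho> \<Longrightarrow> riem_dist M p q < ereal \<eta>"
    and tracing: "\<And>n. \<exists>z\<in>M. \<forall>k\<le>n. riem_dist M (omega_seq \<omega> \<sigma> k z) (x k) < ereal a"
  shows "\<exists>y. is_chain M \<Lambda> \<omega> y \<and> (\<forall>k. riem_dist M (x k) (y k) < ereal (a + \<eta>))"
proof -
  txt \<open>The shadowing chain is the true orbit of a cluster point of the tracing points.\<close>
  obtain z where zM: "\<And>n. z n \<in> M"
    and z: "\<And>n k. k \<le> n \<Longrightarrow> riem_dist M (omega_seq \<omega> \<sigma> k (z n)) (x k) < ereal a"
    using tracing by metis
  obtain z_lim r where "z_lim \<in> M" "strict_mono r" and lim: "(z \<circ> r) \<longlonglongrightarrow> z_lim"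
    using compact_imp_seq_compact[OF \<open>compact M\<close>] zM unfolding seq_compact_def by metis
  have self_map: "continuous_on M (omega_seq \<omega> \<sigma> k) \<and> omega_seq \<omega> \<sigma> k ` M \<subseteq> M" for k
    using IFS \<sigma> is_IFS_continuous_on unfolding is_IFS_def by (intro omega_seq_self_map) blast
  define y where "y k = omega_seq \<omega> \<sigma> k z_lim" for k
  have "is_chain M \<Lambda> \<omega> y"
    unfolding is_chain_def y_def using self_map \<open>z_lim \<in> M\<close> \<sigma> by auto
  moreover have "riem_dist M (x k) (y k) < ereal (a + \<eta>)" for k
  proof -
    have "(\<lambda>n. omega_seq \<omega> \<sigma> k ((z \<circ> r) n)) \<longlonglongrightarrow> y k"
      unfolding y_def using self_map zM \<open>z_lim \<in> M\<close>
      by (intro continuous_on_tendsto_compose[OF _ lim]) auto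
    then have "\<forall>\<^sub>F n in sequentially. dist (omega_seq \<omega> \<sigma> k (z (r n))) (y k) < \<rho> \<and> k \<le> r n"
      using \<open>\<rho> > 0\<close> filterlim_subseq[OF \<open>strict_mono r\<close>]
      by (intro eventually_conj) (auto dest: tendstoD simp: filterlim_at_top)
    then obtain n where n: "dist (omega_seq \<omega> \<sigma> k (z (r n))) (y k) < \<rho>" "k \<le> r n"
      using eventually_sequentially by auto
    have "riem_dist M (x k) (omega_seq \<omega> \<sigma> k (z (r n))) < ereal a"
      using z[OF n(2)] by (simp add: riem_dist_commute)
    moreover have "riem_dist M (omega_seq \<omega> \<sigma> k (z (r n))) (y k) < ereal \<eta>"
      using close n(1) self_map zM \<open>z_lim \<in> M\<close> unfolding y_def by blast
    ultimately show ?thesis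
      by (rule riem_dist_triangle_less)
  qed
  ultimately show ?thesis by blast
qed

theorem mainTheorem8:
  fixes M :: "'a::euclidean_space set"
    and \<Lambda> :: "'l::metric_space set"
    and \<omega> :: "'l \<Rightarrow> 'a \<Rightarrow> 'a"
    and k :: nat
  assumes "smooth_submanifold k M"
    and "compact M"
    and "is_IFS M \<Lambda> \<omega>"
    and "topologically_stable M (riem_dist M) \<Lambda> \<omega>"
  shows "has_shadowing M (riem_dist M) \<Lambda> \<omega>"
proof (unfold has_shadowing_def, intro allI impI)
  fix \<epsilon> :: real assume "\<epsilon> > 0"
  obtain \<delta> where "\<delta> > 0" and trace: "\<And>\<sigma> g x n. \<forall>k. \<sigma> k \<in> \<Lambda> \<Longrightarrow>
      perturbed_orbit M (riem_dist M) \<omega> \<delta> \<sigma> g x \<Longrightarrow>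
      \<exists>z\<in>M. \<forall>k\<le>n. riem_dist M (omega_seq \<omega> \<sigma> k z) (x k) < ereal (\<epsilon> / 2)"
    by (rule topologically_stable_finite_tracing[OF assms(4,3,2) riem_dist_self
          riem_dist_uniformly_dominated[OF assms(1,2)], where \<epsilon> = "\<epsilon> / 2"])
      (use \<open>\<epsilon> > 0\<close> in auto)
  define \<eta> where "\<eta> = min \<delta> (\<epsilon> / 2)"
  have "\<eta> > 0" "\<eta> \<le> \<delta>" "\<epsilon> / 2 + \<eta> \<le> \<epsilon>"
    using \<open>\<delta> > 0\<close> \<open>\<epsilon> > 0\<close> by (auto simp: \<eta>_def)
  obtain \<rho> where "\<rho> > 0"
    and push: "\<And>p q. p \<in> M \<Longrightarrow> q \<in> M \<Longrightarrow> dist p q < \<rho> \<Longrightarrow> \<exists>\<Phi>. near_identity M \<eta> \<Phi> \<and> \<Phi> p = q"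
    by (rule near_identity_maps_uniform[OF assms(1,2) \<open>\<eta> > 0\<close>]) auto
  then have close: "\<And>p q. p \<in> M \<Longrightarrow> q \<in> M \<Longrightarrow> dist p q < \<rho> \<Longrightarrow> riem_dist M p q < ereal \<eta>"
    unfolding near_identity_def by metis
  show "\<exists>\<delta>>0. \<forall>x. is_delta_chain M (riem_dist M) \<Lambda> \<omega> \<delta> x \<longrightarrow>
          (\<exists>y. is_chain M \<Lambda> \<omega> y \<and> (\<forall>k. riem_dist M (x k) (y k) < ereal \<epsilon>))"
  proof (intro exI[of _ "\<rho> / 2"] conjI allI impI)
    show "\<rho> / 2 > 0" using \<open>\<rho> > 0\<close> by simp
    fix x assume chain: "is_delta_chain M (riem_dist M) \<Lambda> \<omega> (\<rho> / 2) x"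
    obtain \<sigma> g where \<sigma>: "\<forall>k. \<sigma> k \<in> \<Lambda>" and "perturbed_orbit M (riem_dist M) \<omega> \<eta> \<sigma> g x"
      by (rule delta_chain_perturbed_orbit[OF assms(3) chain _ push]) (use \<open>\<rho> > 0\<close> in auto)
    then have tracing: "\<exists>z\<in>M. \<forall>k\<le>n. riem_dist M (omega_seq \<omega> \<sigma> k z) (x k) < ereal (\<epsilon> / 2)" for n
      using trace perturbed_orbit_mono \<open>\<eta> \<le> \<delta>\<close> by blast
    have "\<exists>y. is_chain M \<Lambda> \<omega> y \<and> (\<forall>k. riem_dist M (x k) (y k) < ereal (\<epsilon> / 2 + \<eta>))"
      by (rule shadowing_chain_of_finite_tracings[OF assms(2,3), where \<sigma> = \<sigma> and \<rho> = \<rho>])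
        (use \<sigma> \<open>\<rho> > 0\<close> close tracing in auto)
    with \<open>\<epsilon> / 2 + \<eta> \<le> \<epsilon>\<close> show "\<exists>y. is_chain M \<Lambda> \<omega> y \<and> (\<forall>k. riem_dist M (x k) (y k) < ereal \<epsilon>)"
      by (meson ereal_less_eq(3) order_less_le_trans)
  qed
qed
end
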